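(* Let $I=(f_1,\dots,f_n)\subset R=\mathbb{K}[x_1,\dots,x_n]$ be a complete intersection such that for every $d$-dimensional simplicial complex $\Delta$ on vertex set $[n]$, $f_i\in I_\Delta$ for every $i>d+1$. Then $f_1,\dots,f_{d+1}$ is a system of parameters for $I_\Delta$ for every $d$-dimensional simplicial complex $\Delta$ on $[n]$.
   Context: $I_\Delta$ is the Stanley–Reisner ideal of $\Delta$. For a homogeneous ideal $I'$ with $\dim R/I'=d+1$, a system of parameters is a sequence of homogeneous elements $g_1,\dots,g_{d+1}$ such that $R/(I'+(g_1,\dots,g_{d+1}))$ is a finite-dimensional $\mathbb{K}$-vector space. *)

theory Defs
  imports "HOL-Library.Poly_Mapping" "HOL-Library.Cardinality"
begin

text \<open>Polynomial ring K[x_v : v in 'v] for a finite variable type 'v (n = CARD('v)):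
  polynomials are finitely supported maps from monomials (exponent vectors 'v =>0 nat)
  to coefficients.  The vertex set [n] of the simplicial complexes is identified with
  the variable type 'v (vertex v corresponds to the variable x_v).\<close>

type_synonym ('v, 'k) mpoly = "('v \<Rightarrow>\<^sub>0 nat) \<Rightarrow>\<^sub>0 'k"

definition is_ideal :: "('v, 'k::comm_ring_1) mpoly set \<Rightarrow> bool" where
  "is_ideal J \<longleftrightarrow> 0 \<in> J \<and> (\<forall>a\<in>J. \<forall>b\<in>J. a + b \<in> J) \<and> (\<forall>r. \<forall>a\<in>J. r * a \<in> J)"

definition ideal_gen :: "('v, 'k::comm_ring_1) mpoly set \<Rightarrow> ('v, 'k) mpoly set" where
  "ideal_gen S = \<Inter>{J. is_ideal J \<and> S \<subseteq> J}"

definition const_poly :: "'k::comm_ring_1 \<Rightarrow> ('v, 'k) mpoly" where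
  "const_poly c = Poly_Mapping.single 0 c"

definition mdeg :: "('v \<Rightarrow>\<^sub>0 nat) \<Rightarrow> nat" where
  "mdeg m = (\<Sum>v\<in>Poly_Mapping.keys m. Poly_Mapping.lookup m v)"

definition homogeneous :: "('v, 'k::comm_ring_1) mpoly \<Rightarrow> bool" where
  "homogeneous p \<longleftrightarrow> (\<exists>k. \<forall>m\<in>Poly_Mapping.keys p. mdeg m = k)"

text \<open>R/J is a finite-dimensional K-vector space: a finite set B of polynomials whose
  classes span R/J over K.\<close>
definition fin_dim_quotient :: "('v, 'k::field) mpoly set \<Rightarrow> bool" where
  "fin_dim_quotient J \<longleftrightarrow>
     (\<exists>B. finite B \<and> (\<forall>p. \<exists>c. p - (\<Sum>b\<in>B. const_poly (c b) * b) \<in> J))"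

text \<open>f_1,...,f_m (indices 1..m) is a regular sequence of homogeneous elements:
  each f_i is a non-zero-divisor on R/(f_1,...,f_{i-1}), and (f_1,...,f_m) is proper.\<close>
definition regular_sequence :: "(nat \<Rightarrow> ('v, 'k::field) mpoly) \<Rightarrow> nat \<Rightarrow> bool" where
  "regular_sequence f m \<longleftrightarrow>
     ideal_gen (f ` {1..m}) \<noteq> UNIV \<and>
     (\<forall>i\<in>{1..m}. \<forall>g. f i * g \<in> ideal_gen (f ` {1..<i}) \<longrightarrow> g \<in> ideal_gen (f ` {1..<i}))"

definition complete_intersection :: "(nat \<Rightarrow> ('v::finite, 'k::field) mpoly) \<Rightarrow> bool" where
  "complete_intersection f \<longleftrightarrow>
     (\<forall>i\<in>{1..CARD('v)}. homogeneous (f i)) \<and> regular_sequence f CARD('v)"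

text \<open>Simplicial complex on the vertex set 'v (every vertex is a face).\<close>
definition simplicial_complex :: "'v::finite set set \<Rightarrow> bool" where
  "simplicial_complex \<Delta> \<longleftrightarrow> {} \<in> \<Delta> \<and> (\<forall>v. {v} \<in> \<Delta>) \<and>
     (\<forall>F\<in>\<Delta>. \<forall>G. G \<subseteq> F \<longrightarrow> G \<in> \<Delta>)"

definition complex_dim :: "'v::finite set set \<Rightarrow> nat \<Rightarrow> bool" where
  "complex_dim \<Delta> d \<longleftrightarrow> (\<exists>F\<in>\<Delta>. card F = d + 1) \<and> (\<forall>F\<in>\<Delta>. card F \<le> d + 1)"

definition sqfree_monomial :: "'v set \<Rightarrow> ('v, 'k::comm_ring_1) mpoly" where
  "sqfree_monomial F = Poly_Mapping.single (\<Sum>v\<in>F. Poly_Mapping.single v 1) 1"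

definition stanley_reisner :: "'v::finite set set \<Rightarrow> ('v, 'k::comm_ring_1) mpoly set" where
  "stanley_reisner \<Delta> = ideal_gen {sqfree_monomial F | F. F \<notin> \<Delta>}"

definition system_of_parameters :: "('v, 'k::field) mpoly set \<Rightarrow> (nat \<Rightarrow> ('v, 'k) mpoly) \<Rightarrow> nat \<Rightarrow> bool" where
  "system_of_parameters J g m \<longleftrightarrow>
     (\<forall>i\<in>{1..m}. homogeneous (g i)) \<and> fin_dim_quotient (ideal_gen (J \<union> g ` {1..m}))"

end

theory Submission
  imports Defs "HOL-Computational_Algebra.Polynomial_FPS"
begin

text \<open>
  For a homogeneous ideal J of R = K[x_v] let H_J = \<Sum>_k dim_K (R/J)_k t^k be its Hilbert series.
  If f is a form of degree e and a non-zero-divisor on R/J, multiplication by f gives exact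
  sequences 0 -> (R/J)_(k-e) -> (R/J)_k -> (R/(J + (f)))_k -> 0, so H_(J+(f)) = (1 - t^e) H_J.
  The variables form such a sequence, ending in the ideal (x_v : v) with Hilbert series 1; hence
  (1 - t)^n H_0 = 1.  For the complete intersection f_1, ..., f_n of degrees e_i this gives
  H_(f_1,...,f_n) = \<Prod>_i (1 + t + ... + t^(e_i - 1)), a polynomial, so (f_1, ..., f_n) contains
  every form of large degree.  By hypothesis this ideal lies in I_\<Delta> + (f_1, ..., f_(d+1)), whose
  quotient is therefore spanned by the finitely many monomials of small degree.
\<close>

section \<open>Dimension of finitely spanned subspaces\<close>

context vector_space
begin

lemma independent_Un_if_span_Int_trivial:
  assumes "finite X" "finite Y" "independent X" "independent Y" "span X \<inter> span Y \<subseteq> {0}"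
  shows "independent (X \<union> Y)" "X \<inter> Y = {}"
proof -
  show disj: "X \<inter> Y = {}"
  proof (rule ccontr)
    assume "X \<inter> Y \<noteq> {}"
    then obtain x where "x \<in> X" "x \<in> Y" by auto
    then have "x = 0" using assms(5) span_base by blast
    then show False using \<open>x \<in> X\<close> assms(3) dependent_zero by auto
  qed
  show "independent (X \<union> Y)"
  proof (rule independent_if_scalars_zero)
    show "finite (X \<union> Y)" using assms by auto
    fix u x assume s: "(\<Sum>x\<in>X \<union> Y. u x *s x) = 0" and x: "x \<in> X \<union> Y"
    have "(\<Sum>x\<in>X \<union> Y. u x *s x) = (\<Sum>x\<in>X. u x *s x) + (\<Sum>x\<in>Y. u x *s x)"
      using disj assms by (simp add: sum.union_disjoint)
    then have e: "(\<Sum>x\<in>X. u x *s x) = - (\<Sum>x\<in>Y. u x *s x)" using s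
      by (simp add: eq_neg_iff_add_eq_0)
    have "(\<Sum>x\<in>X. u x *s x) \<in> span X" by (intro span_sum span_scale span_base) auto
    moreover have "(\<Sum>x\<in>X. u x *s x) \<in> span Y" unfolding e
      by (intro span_neg span_sum span_scale span_base) auto
    ultimately have zX: "(\<Sum>x\<in>X. u x *s x) = 0" using assms(5) by auto
    then have zY: "(\<Sum>x\<in>Y. u x *s x) = 0" using e by simp
    show "u x = 0"
      using x independentD[OF assms(3,1) order_refl zX] independentD[OF assms(4,2) order_refl zY]
      by auto
  qed
qed

lemma span_Int_trivial_if_independent_Un:
  assumes "finite X" "finite Y" "independent (X \<union> Y)" "X \<inter> Y = {}"
  shows "span X \<inter> span Y \<subseteq> {0}"
proof
  fix z assume "z \<in> span X \<inter> span Y"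
  then have "z \<in> range (\<lambda>u. \<Sum>v\<in>X. u v *s v)" "z \<in> range (\<lambda>u. \<Sum>v\<in>Y. u v *s v)"
    using span_finite[OF assms(1)] span_finite[OF assms(2)] by auto
  then obtain a b where a: "z = (\<Sum>v\<in>X. a v *s v)" and b: "z = (\<Sum>v\<in>Y. b v *s v)"
    by blast
  define u where "u v = (if v \<in> X then a v else - b v)" for v
  have "(\<Sum>v\<in>X \<union> Y. u v *s v) = (\<Sum>v\<in>X. u v *s v) + (\<Sum>v\<in>Y. u v *s v)"
    using assms by (simp add: sum.union_disjoint)
  also have "(\<Sum>v\<in>X. u v *s v) = z" unfolding a u_def by simp
  also have "(\<Sum>v\<in>Y. u v *s v) = - z" unfolding b u_def using assms(4)
    by (auto simp: sum_negf[symmetric] intro!: sum.cong)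
  finally have "(\<Sum>v\<in>X \<union> Y. u v *s v) = 0" by simp
  then have "\<forall>v\<in>X. u v = 0" using independentD[OF assms(3)] assms(1,2) by blast
  then have "\<forall>v\<in>X. a v = 0" unfolding u_def by auto
  then show "z \<in> {0}" unfolding a by simp
qed

lemma finite_independent_in_span:
  assumes "finite F" "S \<subseteq> span F" "independent B" "B \<subseteq> S"
  shows "finite B"
  using independent_span_bound[OF assms(1,3)] assms(2,4) by blast

lemma subspace_eq_if_dim_eq:
  assumes "S \<subseteq> T" "subspace S" "T \<subseteq> span F" "finite F" "dim S = dim T"
  shows "S = T"
proof -
  obtain A where A: "A \<subseteq> S" "independent A" "S \<subseteq> span A" "card A = dim S"
    using basis_exists by blast
  obtain B where B: "A \<subseteq> B" "B \<subseteq> T" "independent B" "T \<subseteq> span B"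
    using maximal_independent_subset_extend[of A T] A assms(1) by blast
  have "finite B" using finite_independent_in_span[OF assms(4,3) B(3,2)] .
  moreover have "card B = dim T" using basis_card_eq_dim B by blast
  ultimately have "A = B" using card_subset_eq[of B A] B(1) A(4) assms(5) by simp
  then show ?thesis using B A span_minimal[of A S] assms(1,2) by blast
qed

lemma dim_span_Un_image:
  assumes U: "subspace U" "U \<subseteq> span G" "finite G"
    and lin: "Vector_Spaces.linear scale scale \<phi>"
    and C: "independent C" "finite C"
    and ker: "\<And>x. x \<in> span C \<Longrightarrow> \<phi> x \<in> U \<Longrightarrow> x = 0"
  shows "dim (span (U \<union> \<phi> ` C)) = dim U + card C"
proof -
  interpret L: Vector_Spaces.linear scale scale \<phi> by fact
  obtain D where D: "D \<subseteq> U" "independent D" "U \<subseteq> span D" "card D = dim U"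
    using basis_exists by blast
  have fD: "finite D" using finite_independent_in_span[OF U(3,2) D(2,1)] .
  have inj: "inj_on \<phi> (span C)"
    unfolding L.inj_on_iff_eq_0[OF subspace_span] using ker subspace_0[OF U(1)] by auto
  have indC: "independent (\<phi> ` C)"
    using L.independent_injective_image[OF C(1) inj] .
  have card_C: "card (\<phi> ` C) = card C"
    using card_image inj_on_subset[OF inj span_superset] by blast
  have "span D \<inter> span (\<phi> ` C) \<subseteq> {0}"
  proof
    fix y assume y: "y \<in> span D \<inter> span (\<phi> ` C)"
    then obtain x where x: "x \<in> span C" "y = \<phi> x" using L.span_image by auto
    have "y \<in> U" using y span_minimal[OF D(1) U(1)] by auto
    then have "x = 0" using ker x by blast
    then show "y \<in> {0}" using x L.zero by simp
  qed
  note DC = independent_Un_if_span_Int_trivial[OF fD finite_imageI[OF C(2)] D(2) indC this]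
  have "span (U \<union> \<phi> ` C) = span (D \<union> \<phi> ` C)"
  proof (rule span_eq[THEN iffD2, OF conjI])
    have "span D \<subseteq> span (D \<union> \<phi> ` C)" by (rule span_mono) blast
    then show "U \<union> \<phi> ` C \<subseteq> span (D \<union> \<phi> ` C)"
      using D(3) span_superset[of "D \<union> \<phi> ` C"] by blast
    show "D \<union> \<phi> ` C \<subseteq> span (U \<union> \<phi> ` C)"
      using D(1) span_superset[of "U \<union> \<phi> ` C"] by blast
  qed
  then have "dim (span (U \<union> \<phi> ` C)) = card (D \<union> \<phi> ` C)"
    using dim_span_eq_card_independent[OF DC(1)] by simp
  also have "\<dots> = card D + card C"
    using card_Un_disjoint[OF fD finite_imageI[OF C(2)] DC(2)] card_C by simp
  finally show ?thesis using D(4) by simp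
qed

lemma dim_span_Un_image_preimage:
  assumes U: "subspace U" "U \<subseteq> span G" "finite G"
    and S: "subspace S" "S \<subseteq> span F" "finite F"
    and T: "subspace T" "T \<subseteq> S"
    and lin: "Vector_Spaces.linear scale scale \<phi>"
    and image: "\<phi> ` T \<subseteq> U" and preimage: "\<And>x. x \<in> S \<Longrightarrow> \<phi> x \<in> U \<Longrightarrow> x \<in> T"
  shows "dim (span (U \<union> \<phi> ` S)) + dim T = dim U + dim S"
proof -
  interpret L: Vector_Spaces.linear scale scale \<phi> by fact
  obtain A where A: "A \<subseteq> T" "independent A" "T \<subseteq> span A" "card A = dim T"
    using basis_exists by blast
  obtain B where B: "A \<subseteq> B" "B \<subseteq> S" "independent B" "S \<subseteq> span B"
    using maximal_independent_subset_extend[of A S] A T(2) by blast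
  have fB: "finite B" using finite_independent_in_span[OF S(3) S(2) B(3,2)] .
  define C where "C = B - A"
  have fA: "finite A" using fB B(1) finite_subset by blast
  have fC: "finite C" using fB C_def by simp
  have BAC: "B = A \<union> C" "A \<inter> C = {}" using B(1) C_def by auto
  have AC: "span A \<inter> span C \<subseteq> {0}"
    using span_Int_trivial_if_independent_Un[OF fA fC] BAC B(3) by auto
  have spanC: "span C \<subseteq> S" using span_minimal[of C S] S(1) B(2) C_def by auto
  have spanA: "span A \<subseteq> T" using span_minimal[OF A(1) T(1)] .
  have ker: "x = 0" if "x \<in> span C" "\<phi> x \<in> U" for x
  proof -
    have "x \<in> T" using preimage[of x] that spanC by blast
    then show "x = 0" using that(1) A(3) AC by blast
  qed
  have span_eq: "span (U \<union> \<phi> ` S) = span (U \<union> \<phi> ` C)"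
  proof (rule span_eq[THEN iffD2], rule conjI)
    show "U \<union> \<phi> ` S \<subseteq> span (U \<union> \<phi> ` C)"
    proof (intro Un_least subsetI)
      fix z assume "z \<in> \<phi> ` S"
      then obtain g where g: "g \<in> S" "z = \<phi> g" by auto
      then have "g \<in> span (A \<union> C)" using B(4) BAC by auto
      then obtain a c where ac: "a \<in> span A" "c \<in> span C" "g = a + c" unfolding span_Un by auto
      have "\<phi> a \<in> U" using spanA ac image by auto
      moreover have "\<phi> c \<in> span (\<phi> ` C)" using L.span_image ac by auto
      moreover have "span (\<phi> ` C) \<subseteq> span (U \<union> \<phi> ` C)" by (rule span_mono) blast
      ultimately have "\<phi> a + \<phi> c \<in> span (U \<union> \<phi> ` C)"
        by (intro span_add) (auto intro: span_base)
      then show "z \<in> span (U \<union> \<phi> ` C)" using g ac L.add by simp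
    qed (auto intro: span_base)
    show "U \<union> \<phi> ` C \<subseteq> span (U \<union> \<phi> ` S)"
      using B(2) span_superset[of "U \<union> \<phi> ` S"] unfolding C_def by blast
  qed
  have "independent C" unfolding C_def by (rule independent_mono[OF B(3)]) blast
  then have dim_image: "dim (span (U \<union> \<phi> ` C)) = dim U + card C"
    by (rule dim_span_Un_image[OF U lin _ fC ker])
  have "card B = dim S" using basis_card_eq_dim B by blast
  then have "dim S = dim T + card C" using A(4) BAC card_Un_disjoint[OF fA fC] by simp
  then show ?thesis using span_eq dim_image by simp
qed

end

section \<open>Polynomials as a graded vector space\<close>

abbreviation lookup where "lookup \<equiv> Poly_Mapping.lookup"
abbreviation keys where "keys \<equiv> Poly_Mapping.keys"
abbreviation single where "single \<equiv> Poly_Mapping.single"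

lemma lookup_sum_single:
  "finite A \<Longrightarrow> lookup (\<Sum>m\<in>A. single m (g m)) x = (if x \<in> A then g x else 0)"
  by (induction A rule: finite_induct) (auto simp: lookup_add lookup_single when_def)

lemma poly_mapping_sum_single: "(\<Sum>m\<in>keys p. single m (lookup p m)) = p"
  by (rule poly_mapping_eqI) (simp add: lookup_sum_single in_keys_iff)

definition mpoly_scale :: "'k::field \<Rightarrow> ('v, 'k) mpoly \<Rightarrow> ('v, 'k) mpoly" where
  "mpoly_scale c p = const_poly c * p"

lemma const_poly_add: "const_poly (a + b) = const_poly a + const_poly b"
  unfolding const_poly_def by (simp add: single_add)

lemma const_poly_mult:
  "const_poly (a * b) = const_poly a * (const_poly b :: ('v, 'k::comm_ring_1) mpoly)"
  unfolding const_poly_def by (simp add: mult_single)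

lemma const_poly_1 [simp]: "const_poly 1 = 1"
  unfolding const_poly_def by simp

global_interpretation K: vector_space "mpoly_scale :: 'k::field \<Rightarrow> ('v, 'k) mpoly \<Rightarrow> _"
  by unfold_locales
    (auto simp: mpoly_scale_def distrib_left distrib_right const_poly_add const_poly_mult
      mult.assoc)

lemma lookup_mpoly_scale: "lookup (mpoly_scale c p) m = c * lookup p m"
  unfolding mpoly_scale_def const_poly_def mult_map_scale_conv_mult[symmetric]
  by (simp add: map.rep_eq when_def)

lemma single_eq_mpoly_scale: "single m c = mpoly_scale c (single m (1::'k::field))"
  by (rule poly_mapping_eqI) (simp add: lookup_mpoly_scale lookup_single when_def)

lemma linear_mult_left:
  "Vector_Spaces.linear mpoly_scale mpoly_scale (\<lambda>g. f * (g :: ('v, 'k::field) mpoly))"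
  unfolding Vector_Spaces.linear_iff
  by (simp add: K.vector_space_axioms distrib_left mpoly_scale_def mult.left_commute)

lemma mdeg_eq_sum_UNIV: "mdeg (m :: 'v::finite \<Rightarrow>\<^sub>0 nat) = (\<Sum>v\<in>UNIV. lookup m v)"
  unfolding mdeg_def by (rule sum.mono_neutral_left) (auto simp: in_keys_iff)

lemma mdeg_add: "mdeg (a + b :: 'v::finite \<Rightarrow>\<^sub>0 nat) = mdeg a + mdeg b"
  by (simp add: mdeg_eq_sum_UNIV lookup_add sum.distrib)

lemma lookup_le_mdeg: "lookup (m :: 'v::finite \<Rightarrow>\<^sub>0 nat) v \<le> mdeg m"
  unfolding mdeg_eq_sum_UNIV by (rule member_le_sum) auto

lemma mdeg_eq_0_iff: "mdeg (m :: 'v::finite \<Rightarrow>\<^sub>0 nat) = 0 \<longleftrightarrow> m = 0"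
proof
  assume "mdeg m = 0"
  then have "\<forall>v. lookup m v = 0" using lookup_le_mdeg[of m] by (metis le_zero_eq)
  then show "m = 0" by (intro poly_mapping_eqI) auto
qed (simp add: mdeg_def)

lemma finite_mdeg_eq: "finite {m :: 'v::finite \<Rightarrow>\<^sub>0 nat. mdeg m = k}"
proof -
  have "lookup ` {m :: 'v \<Rightarrow>\<^sub>0 nat. mdeg m = k} \<subseteq> PiE UNIV (\<lambda>_. {..k})"
    using lookup_le_mdeg by (auto simp: PiE_iff)
  then have "finite (lookup ` {m :: 'v \<Rightarrow>\<^sub>0 nat. mdeg m = k})"
    by (rule finite_subset) (auto intro: finite_PiE)
  moreover have "inj_on lookup {m :: 'v \<Rightarrow>\<^sub>0 nat. mdeg m = k}"
    by (rule inj_onI) (rule poly_mapping_eqI, simp)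
  ultimately show ?thesis using finite_imageD by blast
qed

definition forms :: "nat \<Rightarrow> ('v, 'k::comm_ring_1) mpoly set" where
  "forms k = {p. \<forall>m\<in>keys p. mdeg m = k}"

definition monomials_of_degree :: "nat \<Rightarrow> ('v, 'k::comm_ring_1) mpoly set" where
  "monomials_of_degree k = (\<lambda>m. single m 1) ` {m. mdeg m = k}"

lemma homogeneous_iff_forms: "homogeneous p \<longleftrightarrow> (\<exists>k. p \<in> forms k)"
  unfolding homogeneous_def forms_def by auto

lemma subspace_forms: "K.subspace (forms k :: ('v, 'k::field) mpoly set)"
  unfolding K.subspace_def forms_def
  using keys_add by (fastforce simp: in_keys_iff lookup_mpoly_scale)

lemma single_in_forms: "single m c \<in> forms (mdeg m)"
  by (simp add: forms_def)

lemma mult_in_forms: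
  assumes "p \<in> forms a" "q \<in> forms b"
  shows "p * (q :: ('v::finite, 'k::comm_ring_1) mpoly) \<in> forms (a + b)"
  using assms keys_mult[of p q] unfolding forms_def by (fastforce simp: mdeg_add)

lemma finite_monomials_of_degree:
  "finite (monomials_of_degree k :: ('v::finite, 'k::comm_ring_1) mpoly set)"
  unfolding monomials_of_degree_def using finite_mdeg_eq by blast

lemma forms_subset_span_monomials:
  "forms k \<subseteq> K.span (monomials_of_degree k :: ('v::finite, 'k::field) mpoly set)"
proof
  fix p :: "('v, 'k) mpoly" assume p: "p \<in> forms k"
  have "p = (\<Sum>m\<in>keys p. mpoly_scale (lookup p m) (single m 1))"
    by (subst poly_mapping_sum_single[symmetric]) (simp add: single_eq_mpoly_scale[symmetric])
  also have "\<dots> \<in> K.span (monomials_of_degree k)"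
    using p by (intro K.span_sum K.span_scale K.span_base)
      (auto simp: monomials_of_degree_def forms_def)
  finally show "p \<in> K.span (monomials_of_degree k)" .
qed

definition homog_comp :: "nat \<Rightarrow> ('v::finite, 'k::comm_ring_1) mpoly \<Rightarrow> ('v, 'k) mpoly" where
  "homog_comp k p = (\<Sum>m\<in>{m\<in>keys p. mdeg m = k}. single m (lookup p m))"

lemma lookup_homog_comp: "lookup (homog_comp k p) m = (if mdeg m = k then lookup p m else 0)"
  unfolding homog_comp_def by (subst lookup_sum_single) (auto simp: in_keys_iff)

lemma keys_homog_comp_subset: "keys (homog_comp k p) \<subseteq> keys p"
  by (auto simp: in_keys_iff lookup_homog_comp split: if_splits)

lemma homog_comp_in_forms: "homog_comp k p \<in> forms k"
  unfolding forms_def by (auto simp: in_keys_iff lookup_homog_comp split: if_splits)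

lemma homog_comp_add: "homog_comp k (p + q) = homog_comp k p + homog_comp k q"
  by (rule poly_mapping_eqI) (simp add: lookup_homog_comp lookup_add)

lemma homog_comp_0 [simp]: "homog_comp k 0 = 0"
  by (rule poly_mapping_eqI) (simp add: lookup_homog_comp)

lemma homog_comp_sum: "homog_comp k (sum g A) = (\<Sum>a\<in>A. homog_comp k (g a))"
  by (induction A rule: infinite_finite_induct) (auto simp: homog_comp_add)

lemma homog_comp_form: "q \<in> forms l \<Longrightarrow> homog_comp k q = (if l = k then q else 0)"
  by (rule poly_mapping_eqI) (auto simp: lookup_homog_comp forms_def in_keys_iff)

lemma sum_homog_comp: "(\<Sum>k\<in>mdeg ` keys p. homog_comp k p) = p"
  by (rule poly_mapping_eqI) (auto simp: lookup_sum lookup_homog_comp in_keys_iff sum.delta)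

lemma homog_comp_eq_0: "k \<notin> mdeg ` keys p \<Longrightarrow> homog_comp k p = 0"
  by (rule poly_mapping_eqI) (auto simp: lookup_homog_comp in_keys_iff)

lemma homog_comp_mult_form:
  assumes s: "s \<in> forms e"
  shows "homog_comp k (r * s) = (if e \<le> k then homog_comp (k - e) r * s else 0)"
proof -
  let ?D = "mdeg ` keys r"
  have "homog_comp k (r * s) = (\<Sum>j\<in>?D. homog_comp k (homog_comp j r * s))"
    by (subst sum_homog_comp[of r, symmetric]) (simp add: sum_distrib_right homog_comp_sum)
  also have "\<dots> = (\<Sum>j\<in>?D. if j + e = k then homog_comp j r * s else 0)"
    by (intro sum.cong refl homog_comp_form mult_in_forms homog_comp_in_forms s)
  also have "\<dots> = (if e \<le> k then homog_comp (k - e) r * s else 0)"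
  proof (cases "e \<le> k")
    case True
    then have "(\<Sum>j\<in>?D. if j + e = k then homog_comp j r * s else 0)
        = (\<Sum>j\<in>?D. if j = k - e then homog_comp j r * s else 0)"
      by (intro sum.cong) auto
    also have "\<dots> = homog_comp (k - e) r * s"
      using homog_comp_eq_0[of "k - e" r] by (auto simp: sum.delta)
    finally show ?thesis using True by simp
  qed (auto intro!: sum.neutral)
  finally show ?thesis .
qed

section \<open>Ideals\<close>

lemma is_ideal_ideal_gen: "is_ideal (ideal_gen S)"
  unfolding ideal_gen_def is_ideal_def by auto

lemma ideal_gen_superset: "S \<subseteq> ideal_gen S"
  unfolding ideal_gen_def by auto

lemma ideal_gen_minimal: "is_ideal J \<Longrightarrow> S \<subseteq> J \<Longrightarrow> ideal_gen S \<subseteq> J"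
  unfolding ideal_gen_def by auto

lemma ideal_0: "is_ideal J \<Longrightarrow> 0 \<in> J"
  unfolding is_ideal_def by auto

lemma ideal_add: "is_ideal J \<Longrightarrow> a \<in> J \<Longrightarrow> b \<in> J \<Longrightarrow> a + b \<in> J"
  unfolding is_ideal_def by auto

lemma ideal_mult: "is_ideal J \<Longrightarrow> a \<in> J \<Longrightarrow> r * a \<in> J"
  unfolding is_ideal_def by auto

lemma ideal_sum: "is_ideal J \<Longrightarrow> (\<And>a. a \<in> A \<Longrightarrow> g a \<in> J) \<Longrightarrow> sum g A \<in> J"
  by (induction A rule: infinite_finite_induct) (auto simp: ideal_0 ideal_add)

lemma ideal_if_monomials:
  "is_ideal J \<Longrightarrow> (\<And>m. m \<in> keys p \<Longrightarrow> single m (lookup p m) \<in> J) \<Longrightarrow> p \<in> J"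
  using ideal_sum[of J "keys p"] poly_mapping_sum_single[of p] by metis

lemma subspace_ideal: "is_ideal (J :: ('v, 'k::field) mpoly set) \<Longrightarrow> K.subspace J"
  unfolding K.subspace_def mpoly_scale_def by (auto simp: ideal_0 ideal_add ideal_mult)

lemma ideal_gen_empty: "ideal_gen {} = {0}"
proof -
  have "is_ideal ({0} :: ('v, 'k::comm_ring_1) mpoly set)" unfolding is_ideal_def by auto
  then show ?thesis using ideal_gen_minimal[of "{0}" "{}"] ideal_0[OF is_ideal_ideal_gen] by auto
qed

definition ideal_extend ::
    "('v, 'k::comm_ring_1) mpoly set \<Rightarrow> ('v, 'k) mpoly \<Rightarrow> ('v, 'k) mpoly set" where
  "ideal_extend J f = {j + r * f | j r. j \<in> J}"

lemma ideal_extendI: "j \<in> J \<Longrightarrow> j + r * f \<in> ideal_extend J f"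
  unfolding ideal_extend_def by blast

lemma ideal_extendE:
  assumes "p \<in> ideal_extend J f"
  obtains j r where "j \<in> J" "p = j + r * f"
  using assms unfolding ideal_extend_def by blast

lemma is_ideal_ideal_extend: assumes J: "is_ideal J" shows "is_ideal (ideal_extend J f)"
  unfolding is_ideal_def
proof (intro conjI ballI allI)
  show "0 \<in> ideal_extend J f" using ideal_extendI[OF ideal_0[OF J], of 0] by simp
next
  fix a b assume "a \<in> ideal_extend J f" "b \<in> ideal_extend J f"
  then obtain j r j' r' where "j \<in> J" "a = j + r * f" "j' \<in> J" "b = j' + r' * f"
    by (auto elim!: ideal_extendE)
  then have "a + b = (j + j') + (r + r') * f" "j + j' \<in> J"
    by (simp_all add: algebra_simps ideal_add[OF J])
  then show "a + b \<in> ideal_extend J f" by (metis ideal_extendI)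
next
  fix s a assume "a \<in> ideal_extend J f"
  then obtain j r where "j \<in> J" "a = j + r * f" by (auto elim!: ideal_extendE)
  then have "s * a = s * j + (s * r) * f" "s * j \<in> J"
    by (simp add: algebra_simps, intro ideal_mult[OF J])
  then show "s * a \<in> ideal_extend J f" by (metis ideal_extendI)
qed

lemma ideal_extend_superset: "is_ideal J \<Longrightarrow> J \<subseteq> ideal_extend J f"
  using ideal_extendI[of _ J 0 f] by auto

lemma ideal_extend_mult: "is_ideal J \<Longrightarrow> r * f \<in> ideal_extend J f"
  using ideal_extendI[OF ideal_0, of J r f] by simp

lemma ideal_extend_minimal:
  "is_ideal J \<Longrightarrow> is_ideal L \<Longrightarrow> J \<subseteq> L \<Longrightarrow> f \<in> L \<Longrightarrow> ideal_extend J f \<subseteq> L"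
  by (auto elim!: ideal_extendE intro: ideal_add ideal_mult)

lemma ideal_gen_insert: "ideal_gen (insert a S) = ideal_extend (ideal_gen S) a"
proof
  show "ideal_gen (insert a S) \<subseteq> ideal_extend (ideal_gen S) a"
    using ideal_extend_superset[OF is_ideal_ideal_gen[of S], of a]
      ideal_gen_superset[of S] ideal_extend_mult[OF is_ideal_ideal_gen[of S], of 1 a]
    by (intro ideal_gen_minimal is_ideal_ideal_extend is_ideal_ideal_gen) auto
  show "ideal_extend (ideal_gen S) a \<subseteq> ideal_gen (insert a S)"
    by (intro ideal_extend_minimal is_ideal_ideal_gen ideal_gen_minimal)
      (auto intro: ideal_gen_superset[THEN subsetD])
qed

definition homogeneous_ideal :: "('v::finite, 'k::comm_ring_1) mpoly set \<Rightarrow> bool" where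
  "homogeneous_ideal J \<longleftrightarrow> is_ideal J \<and> (\<forall>p\<in>J. \<forall>k. homog_comp k p \<in> J)"

lemma homogeneous_ideal_0: "homogeneous_ideal {0}"
  unfolding homogeneous_ideal_def is_ideal_def by auto

lemma homogeneous_ideal_extend:
  assumes J: "homogeneous_ideal J" and f: "f \<in> forms e"
  shows "homogeneous_ideal (ideal_extend J f)"
  unfolding homogeneous_ideal_def
proof (intro conjI ballI allI)
  show "is_ideal (ideal_extend J f)" using J is_ideal_ideal_extend homogeneous_ideal_def by blast
  fix p k assume "p \<in> ideal_extend J f"
  then obtain j r where p: "j \<in> J" "p = j + r * f" by (auto elim!: ideal_extendE)
  have "homog_comp k p = homog_comp k j + (if e \<le> k then homog_comp (k - e) r else 0) * f"
    by (simp add: p homog_comp_add homog_comp_mult_form[OF f])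
  moreover have "homog_comp k j \<in> J" using J p unfolding homogeneous_ideal_def by auto
  ultimately show "homog_comp k p \<in> ideal_extend J f" by (simp add: ideal_extendI)
qed

section \<open>Hilbert series\<close>

definition hilbert_fun :: "('v::finite, 'k::field) mpoly set \<Rightarrow> nat \<Rightarrow> int" where
  "hilbert_fun J k = int (K.dim (forms k :: ('v, 'k) mpoly set)) - int (K.dim (J \<inter> forms k))"

definition hilbert_series :: "('v::finite, 'k::field) mpoly set \<Rightarrow> int fps" where
  "hilbert_series J = Abs_fps (hilbert_fun J)"

lemma forms_ideal_extend:
  assumes J: "homogeneous_ideal J" and f: "f \<in> forms e" and ek: "e \<le> k"
  shows "ideal_extend J f \<inter> forms k = K.span ((J \<inter> forms k) \<union> (\<lambda>g. f * g) ` forms (k - e))"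
proof
  have J_ideal: "is_ideal J" using J homogeneous_ideal_def by blast
  show "ideal_extend J f \<inter> forms k \<subseteq> K.span ((J \<inter> forms k) \<union> (\<lambda>g. f * g) ` forms (k - e))"
  proof
    fix p assume p: "p \<in> ideal_extend J f \<inter> forms k"
    then obtain j r where jr: "j \<in> J" "p = j + r * f" by (auto elim!: ideal_extendE)
    have "p = homog_comp k p" using p homog_comp_form[of p k k] by simp
    also have "\<dots> = homog_comp k j + homog_comp (k - e) r * f"
      using ek by (simp add: jr(2) homog_comp_add homog_comp_mult_form[OF f])
    finally have p_eq: "p = homog_comp k j + f * homog_comp (k - e) r"
      by (simp add: mult.commute)
    have "homog_comp k j \<in> J \<inter> forms k"
      using J jr homog_comp_in_forms unfolding homogeneous_ideal_def by blast
    moreover have "f * homog_comp (k - e) r \<in> (\<lambda>g. f * g) ` forms (k - e)"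
      using homog_comp_in_forms by blast
    ultimately show "p \<in> K.span ((J \<inter> forms k) \<union> (\<lambda>g. f * g) ` forms (k - e))"
      unfolding p_eq by (intro K.span_add K.span_base) auto
  qed
  show "K.span ((J \<inter> forms k) \<union> (\<lambda>g. f * g) ` forms (k - e)) \<subseteq> ideal_extend J f \<inter> forms k"
  proof (rule K.span_minimal)
    show "K.subspace (ideal_extend J f \<inter> forms k)"
      by (intro K.subspace_inter subspace_ideal is_ideal_ideal_extend J_ideal subspace_forms)
    have "f * g \<in> ideal_extend J f \<inter> forms k" if "g \<in> forms (k - e)" for g
      using ideal_extend_mult[OF J_ideal, of g f] mult_in_forms[OF f that] ek
      by (simp add: mult.commute)
    then show "J \<inter> forms k \<union> (\<lambda>g. f * g) ` forms (k - e) \<subseteq> ideal_extend J f \<inter> forms k"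
      using ideal_extend_superset[OF J_ideal, of f] by blast
  qed
qed

lemma forms_ideal_extend_low:
  assumes J: "homogeneous_ideal J" and f: "f \<in> forms e" and ke: "k < e"
  shows "ideal_extend J f \<inter> forms k = J \<inter> forms k"
proof
  have J_ideal: "is_ideal J" using J homogeneous_ideal_def by blast
  show "ideal_extend J f \<inter> forms k \<subseteq> J \<inter> forms k"
  proof
    fix p assume p: "p \<in> ideal_extend J f \<inter> forms k"
    then obtain j r where jr: "j \<in> J" "p = j + r * f" by (auto elim!: ideal_extendE)
    have "p = homog_comp k p" using p homog_comp_form[of p k k] by simp
    also have "\<dots> = homog_comp k j"
      using ke by (simp add: jr(2) homog_comp_add homog_comp_mult_form[OF f])
    finally show "p \<in> J \<inter> forms k" using p J jr unfolding homogeneous_ideal_def by auto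
  qed
  show "J \<inter> forms k \<subseteq> ideal_extend J f \<inter> forms k"
    using ideal_extend_superset[OF J_ideal, of f] by blast
qed

lemma hilbert_fun_ideal_extend:
  fixes J :: "('v::finite, 'k::field) mpoly set"
  assumes J: "homogeneous_ideal J" and f: "f \<in> forms e" and nzd: "\<And>g. f * g \<in> J \<Longrightarrow> g \<in> J"
  shows "hilbert_fun (ideal_extend J f) k
    = hilbert_fun J k - (if e \<le> k then hilbert_fun J (k - e) else 0)"
proof (cases "e \<le> k")
  case True
  have J_ideal: "is_ideal J" using J homogeneous_ideal_def by blast
  have "K.dim (K.span ((J \<inter> forms k) \<union> (\<lambda>g. f * g) ` forms (k - e))) + K.dim (J \<inter> forms (k - e))
      = K.dim (J \<inter> forms k) + K.dim (forms (k - e) :: ('v, 'k) mpoly set)"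
  proof (rule K.dim_span_Un_image_preimage)
    show "J \<inter> forms k \<subseteq> K.span (monomials_of_degree k)"
      using forms_subset_span_monomials by blast
    show "forms (k - e) \<subseteq> K.span (monomials_of_degree (k - e) :: ('v, 'k) mpoly set)"
      by (rule forms_subset_span_monomials)
    show "(\<lambda>g. f * g) ` (J \<inter> forms (k - e)) \<subseteq> J \<inter> forms k"
      using mult_in_forms[OF f] True ideal_mult[OF J_ideal] by fastforce
  qed (use nzd in \<open>auto intro: finite_monomials_of_degree linear_mult_left
    K.subspace_inter subspace_ideal J_ideal subspace_forms\<close>)
  then show ?thesis using True forms_ideal_extend[OF J f True] unfolding hilbert_fun_def by simp
next
  case False
  then show ?thesis using forms_ideal_extend_low[OF J f] unfolding hilbert_fun_def by simp
qed

lemma hilbert_series_ideal_extend: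
  fixes J :: "('v::finite, 'k::field) mpoly set"
  assumes "homogeneous_ideal J" and "f \<in> forms e" and "\<And>g. f * g \<in> J \<Longrightarrow> g \<in> J"
  shows "hilbert_series (ideal_extend J f) = (1 - fps_X ^ e) * hilbert_series J"
  by (rule fps_ext) (simp add: hilbert_series_def left_diff_distrib fps_X_power_mult_nth
      hilbert_fun_ideal_extend[OF assms] not_less)

lemma forms_subset_if_hilbert_fun_eq_0:
  fixes J :: "('v::finite, 'k::field) mpoly set"
  assumes "is_ideal J" "hilbert_fun J k = 0"
  shows "forms k \<subseteq> J"
proof -
  have "J \<inter> forms k = forms k"
  proof (rule K.subspace_eq_if_dim_eq)
    show "K.subspace (J \<inter> forms k)"
      by (intro K.subspace_inter subspace_ideal assms(1) subspace_forms)
    show "K.dim (J \<inter> forms k) = K.dim (forms k :: ('v, 'k) mpoly set)"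
      using assms(2) unfolding hilbert_fun_def by simp
  qed (use forms_subset_span_monomials finite_monomials_of_degree in auto)
  then show ?thesis by blast
qed

section \<open>The Hilbert series of the polynomial ring\<close>

definition var :: "'v \<Rightarrow> ('v, 'k::comm_ring_1) mpoly" where
  "var v = single (single v 1) 1"

text \<open>The ideal generated by the variables \<open>x\<^sub>v\<close>, \<open>v \<in> V\<close>.\<close>

definition var_ideal :: "'v set \<Rightarrow> ('v, 'k::comm_ring_1) mpoly set" where
  "var_ideal V = {p. \<forall>m\<in>keys p. \<exists>v\<in>V. 0 < lookup m v}"

lemma is_ideal_var_ideal: "is_ideal (var_ideal V :: ('v, 'k::comm_ring_1) mpoly set)"
  unfolding is_ideal_def
proof (intro conjI ballI allI)
  show "0 \<in> var_ideal V" by (simp add: var_ideal_def)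
  fix a b :: "('v, 'k) mpoly" assume "a \<in> var_ideal V" "b \<in> var_ideal V"
  then show "a + b \<in> var_ideal V" using keys_add[of a b] unfolding var_ideal_def by blast
next
  fix r a :: "('v, 'k) mpoly" assume a: "a \<in> var_ideal V"
  show "r * a \<in> var_ideal V" unfolding var_ideal_def
  proof (rule CollectI, rule ballI)
    fix m assume "m \<in> keys (r * a)"
    then obtain x y where "m = x + y" "y \<in> keys a" using keys_mult[of r a] by blast
    then obtain v where "v \<in> V" "0 < lookup y v" using a unfolding var_ideal_def by blast
    then show "\<exists>v\<in>V. 0 < lookup m v" using \<open>m = x + y\<close> by (auto simp: lookup_add)
  qed
qed

lemma homogeneous_var_ideal:
  "homogeneous_ideal (var_ideal V :: ('v::finite, 'k::comm_ring_1) mpoly set)"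
  unfolding homogeneous_ideal_def using is_ideal_var_ideal keys_homog_comp_subset
  unfolding var_ideal_def by blast

lemma var_ideal_empty: "var_ideal {} = {0}"
  unfolding var_ideal_def by auto

lemma var_in_forms: "(var v :: ('v::finite, 'k::comm_ring_1) mpoly) \<in> forms 1"
  unfolding var_def using single_in_forms[of "single v 1"] by (simp add: mdeg_def)

lemma var_in_var_ideal: "w \<in> V \<Longrightarrow> (var w :: ('v, 'k::comm_ring_1) mpoly) \<in> var_ideal V"
  unfolding var_ideal_def var_def by (auto intro!: bexI[of _ w])

lemma var_ideal_mono: "V \<subseteq> W \<Longrightarrow> var_ideal V \<subseteq> var_ideal W"
  unfolding var_ideal_def by blast

lemma var_ideal_insert:
  "var_ideal (insert w V) = ideal_extend (var_ideal V) (var w :: ('v, 'k::comm_ring_1) mpoly)"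
proof
  show "var_ideal (insert w V) \<subseteq> ideal_extend (var_ideal V) (var w)"
  proof (rule subsetI, rule ideal_if_monomials[OF is_ideal_ideal_extend[OF is_ideal_var_ideal]])
    fix p m assume p: "p \<in> var_ideal (insert w V)" and m: "m \<in> keys p"
    show "single m (lookup p m) \<in> ideal_extend (var_ideal V) (var w)"
    proof (cases "\<exists>v\<in>V. 0 < lookup m v")
      case True
      then have "single m (lookup p m) \<in> var_ideal V" unfolding var_ideal_def by auto
      then show ?thesis using ideal_extend_superset[OF is_ideal_var_ideal] by blast
    next
      case False
      then have w: "0 < lookup m w" using p m unfolding var_ideal_def by auto
      have "m - single w 1 + single w 1 = m"
        using w by (intro poly_mapping_eqI) (auto simp: lookup_add lookup_minus lookup_single when_def)
      then have "single m (lookup p m) = single (m - single w 1) (lookup p m) * var w"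
        unfolding var_def by (simp add: mult_single)
      then show ?thesis using ideal_extend_mult[OF is_ideal_var_ideal] by metis
    qed
  qed
  show "ideal_extend (var_ideal V) (var w) \<subseteq> var_ideal (insert w V)"
    by (intro ideal_extend_minimal is_ideal_var_ideal var_ideal_mono var_in_var_ideal) auto
qed

lemma lookup_var_mult: "lookup (var w * g) (single w 1 + m) = lookup g m"
proof -
  have "var w * g = (\<Sum>m'\<in>keys g. single (single w 1 + m') (lookup g m'))"
    by (subst poly_mapping_sum_single[of g, symmetric])
      (simp add: var_def sum_distrib_left mult_single)
  then have "lookup (var w * g) (single w 1 + m) = (\<Sum>m'\<in>keys g. (lookup g m' when m' = m))"
    by (simp add: lookup_sum lookup_single)
  also have "\<dots> = lookup g m"
    by (cases "m \<in> keys g") (auto simp: when_def in_keys_iff)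
  finally show ?thesis .
qed

lemma var_mult_in_var_ideal_iff:
  assumes "w \<notin> V"
  shows "var w * g \<in> var_ideal V \<longleftrightarrow> g \<in> var_ideal V"
proof
  assume wg: "var w * g \<in> var_ideal V"
  show "g \<in> var_ideal V"
    unfolding var_ideal_def
  proof (rule CollectI, rule ballI)
    fix m assume "m \<in> keys g"
    then have "single w 1 + m \<in> keys (var w * g)"
      using lookup_var_mult[of w g m] by (simp add: in_keys_iff)
    then obtain v where "v \<in> V" "0 < lookup (single w 1 + m) v"
      using wg unfolding var_ideal_def by blast
    moreover have "v \<noteq> w" using assms \<open>v \<in> V\<close> by auto
    ultimately show "\<exists>v\<in>V. 0 < lookup m v" by (auto simp: lookup_add lookup_single)
  qed
qed (rule ideal_mult[OF is_ideal_var_ideal])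

lemma dim_forms_0: "K.dim (forms 0 :: ('v::finite, 'k::field) mpoly set) = 1"
proof (rule K.dim_unique[of "{1}"])
  show "{1} \<subseteq> (forms 0 :: ('v, 'k) mpoly set)" by (simp add: forms_def mdeg_def)
  show "forms 0 \<subseteq> K.span {1 :: ('v, 'k) mpoly}"
  proof
    fix p :: "('v, 'k) mpoly" assume p: "p \<in> forms 0"
    have "p = mpoly_scale (lookup p 0) 1"
    proof (rule poly_mapping_eqI)
      fix m
      show "lookup p m = lookup (mpoly_scale (lookup p 0) 1) m"
      proof (cases "m = 0")
        case False
        then have "m \<notin> keys p" using p mdeg_eq_0_iff unfolding forms_def by blast
        then show ?thesis using False by (simp add: lookup_mpoly_scale lookup_one in_keys_iff)
      qed (simp add: lookup_mpoly_scale)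
    qed
    then show "p \<in> K.span {1}" by (metis K.span_base K.span_scale singletonI)
  qed
qed simp_all

lemma dim_0_space: "K.dim {0 :: ('v, 'k::field) mpoly} = 0"
  using K.dim_span_eq_card_independent[OF K.independent_empty] by simp

lemma var_ideal_UNIV_Int_forms_0:
  "var_ideal UNIV \<inter> forms 0 = {0 :: ('v::finite, 'k::comm_ring_1) mpoly}"
proof (intro equalityI subsetI)
  fix p :: "('v, 'k) mpoly" assume p: "p \<in> var_ideal UNIV \<inter> forms 0"
  have "m \<notin> keys p" for m
  proof
    assume m: "m \<in> keys p"
    then have "m = 0" using p mdeg_eq_0_iff unfolding forms_def by blast
    then show False using p m unfolding var_ideal_def by auto
  qed
  then show "p \<in> {0}" using keys_eq_empty by blast
qed (simp add: var_ideal_def forms_def)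

lemma forms_subset_var_ideal_UNIV:
  assumes "n \<noteq> 0"
  shows "forms n \<subseteq> (var_ideal UNIV :: ('v::finite, 'k::comm_ring_1) mpoly set)"
proof
  fix p :: "('v, 'k) mpoly" assume p: "p \<in> forms n"
  have "\<exists>v. 0 < lookup m v" if "m \<in> keys p" for m
  proof -
    have "mdeg m = n" using p that unfolding forms_def by blast
    then have "m \<noteq> 0" using assms by (auto simp: mdeg_def)
    then obtain v where "lookup m v \<noteq> 0" using poly_mapping_eqI[of m 0] by auto
    then show ?thesis by blast
  qed
  then show "p \<in> var_ideal UNIV" unfolding var_ideal_def by blast
qed

lemma hilbert_series_var_ideal_UNIV:
  "hilbert_series (var_ideal UNIV :: ('v::finite, 'k::field) mpoly set) = 1"
proof (rule fps_ext)
  fix n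
  show "fps_nth (hilbert_series (var_ideal UNIV :: ('v, 'k) mpoly set)) n = fps_nth 1 n"
  proof (cases "n = 0")
    case True
    then show ?thesis
      using dim_forms_0[where 'v='v and 'k='k] dim_0_space[where 'v='v and 'k='k]
      by (simp add: hilbert_series_def hilbert_fun_def var_ideal_UNIV_Int_forms_0)
  next
    case False
    then have "var_ideal UNIV \<inter> forms n = (forms n :: ('v, 'k) mpoly set)"
      using forms_subset_var_ideal_UNIV by blast
    then show ?thesis using False by (simp add: hilbert_series_def hilbert_fun_def)
  qed
qed

lemma hilbert_series_var_ideal:
  "distinct ws \<Longrightarrow> hilbert_series (var_ideal (set ws) :: ('v::finite, 'k::field) mpoly set)
    = (1 - fps_X) ^ length ws * hilbert_series ({0} :: ('v, 'k) mpoly set)"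
proof (induction ws)
  case (Cons w ws)
  have "hilbert_series (var_ideal (set (w # ws)) :: ('v, 'k) mpoly set)
      = (1 - fps_X ^ 1) * hilbert_series (var_ideal (set ws) :: ('v, 'k) mpoly set)"
    unfolding list.set var_ideal_insert
    using Cons.prems
    by (intro hilbert_series_ideal_extend homogeneous_var_ideal var_in_forms)
      (auto simp: var_mult_in_var_ideal_iff)
  then show ?case using Cons by simp
qed (simp add: var_ideal_empty)

lemma hilbert_series_0_ideal:
  "(1 - fps_X) ^ CARD('v::finite) * hilbert_series ({0} :: ('v, 'k::field) mpoly set) = 1"
proof -
  obtain ws :: "'v list" where ws: "set ws = UNIV" "distinct ws"
    using finite_distinct_list[of "UNIV :: 'v set"] by auto
  then have "length ws = CARD('v)" using distinct_card by fastforce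
  then show ?thesis
    using hilbert_series_var_ideal[OF ws(2), where 'k='k] ws(1)
      hilbert_series_var_ideal_UNIV[where 'v='v and 'k='k] by simp
qed

section \<open>Complete intersections\<close>

lemma fin_dim_quotient_if_forms_subset:
  fixes G :: "('v::finite, 'k::field) mpoly set"
  assumes G: "is_ideal G" and N: "\<And>k. N < k \<Longrightarrow> forms k \<subseteq> G"
  shows "fin_dim_quotient G"
  unfolding fin_dim_quotient_def
proof (intro exI conjI allI)
  let ?M = "{m :: 'v \<Rightarrow>\<^sub>0 nat. mdeg m \<le> N}"
  let ?B = "(\<lambda>m. single m (1::'k)) ` ?M"
  have "?M = (\<Union>k\<le>N. {m. mdeg m = k})" by auto
  then have fin_M: "finite ?M" using finite_mdeg_eq[where 'v='v] by simp
  then show "finite ?B" by simp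
  fix p :: "('v, 'k) mpoly"
  let ?c = "\<lambda>b :: ('v, 'k) mpoly. lookup p (SOME m. b = single m 1)"
  have single_1_inj: "m = m'" if "single m (1::'k) = single m' 1" for m m'
    using that by (metis lookup_single_eq lookup_single_not_eq one_neq_zero)
  have "(\<Sum>b\<in>?B. const_poly (?c b) * b) = (\<Sum>m\<in>?M. const_poly (?c (single m 1)) * single m 1)"
    by (rule sum.reindex_cong[OF inj_onI]) (auto dest: single_1_inj)
  also have "\<dots> = (\<Sum>m\<in>?M. single m (lookup p m))"
  proof (rule sum.cong[OF refl])
    fix m :: "'v \<Rightarrow>\<^sub>0 nat"
    have "(SOME m'. single m (1::'k) = single m' 1) = m"
      by (rule some_equality) (auto dest: single_1_inj)
    then show "const_poly (?c (single m 1)) * single m 1 = single m (lookup p m)"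
      by (simp add: const_poly_def mult_single)
  qed
  finally have sum_B: "(\<Sum>b\<in>?B. const_poly (?c b) * b) = (\<Sum>m\<in>?M. single m (lookup p m))" .
  let ?q = "p - (\<Sum>m\<in>?M. single m (lookup p m))"
  have lookup_q: "lookup ?q m = (if m \<in> ?M then 0 else lookup p m)" for m
    using fin_M by (simp add: lookup_minus lookup_sum_single)
  have "single m (lookup ?q m) \<in> G" if "m \<in> keys ?q" for m
  proof -
    have "N < mdeg m" using that lookup_q[of m] by (auto simp: in_keys_iff split: if_splits)
    then show ?thesis using N single_in_forms by blast
  qed
  then have "?q \<in> G" by (rule ideal_if_monomials[OF G])
  then show "p - (\<Sum>b\<in>?B. const_poly (?c b) * b) \<in> G" unfolding sum_B .
qed

definition hdeg :: "('v::finite, 'k::field) mpoly \<Rightarrow> nat" where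
  "hdeg p = (SOME e. p \<in> forms e)"

lemma homogeneous_in_forms_hdeg: "homogeneous p \<Longrightarrow> p \<in> forms (hdeg p)"
  unfolding hdeg_def homogeneous_iff_forms by (rule someI_ex)

lemma hilbert_series_regular_sequence:
  fixes f :: "nat \<Rightarrow> ('v::finite, 'k::field) mpoly"
  assumes hom: "\<forall>i\<in>{1..n}. homogeneous (f i)" and reg: "regular_sequence f n" and "i \<le> n"
  shows "homogeneous_ideal (ideal_gen (f ` {1..i})) \<and> hilbert_series (ideal_gen (f ` {1..i}))
      = (\<Prod>j\<in>{1..i}. 1 - fps_X ^ hdeg (f j)) * hilbert_series ({0} :: ('v, 'k) mpoly set)"
  using \<open>i \<le> n\<close>
proof (induction i)
  case (Suc i)
  let ?J = "ideal_gen (f ` {1..i})"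
  have ideal_Suc: "ideal_gen (f ` {1..Suc i}) = ideal_extend ?J (f (Suc i))"
    by (simp add: atLeastAtMostSuc_conv ideal_gen_insert)
  have f_Suc: "f (Suc i) \<in> forms (hdeg (f (Suc i)))"
    using hom Suc.prems by (intro homogeneous_in_forms_hdeg) simp
  have "Suc i \<in> {1..n}" "{1..<Suc i} = {1..i}" using Suc.prems by auto
  then have nzd: "f (Suc i) * g \<in> ?J \<Longrightarrow> g \<in> ?J" for g
    using reg unfolding regular_sequence_def by metis
  have IH: "homogeneous_ideal ?J"
    "hilbert_series ?J
      = (\<Prod>j\<in>{1..i}. 1 - fps_X ^ hdeg (f j)) * hilbert_series ({0} :: ('v, 'k) mpoly set)"
    using Suc by simp_all
  have hom_Suc: "homogeneous_ideal (ideal_gen (f ` {1..Suc i}))"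
    unfolding ideal_Suc by (rule homogeneous_ideal_extend[OF IH(1) f_Suc])
  have series_Suc: "hilbert_series (ideal_gen (f ` {1..Suc i}))
      = (1 - fps_X ^ hdeg (f (Suc i))) * hilbert_series ?J"
    unfolding ideal_Suc by (rule hilbert_series_ideal_extend[OF IH(1) f_Suc nzd])
  have prod_Suc: "(\<Prod>j\<in>{1..Suc i}. 1 - fps_X ^ hdeg (f j))
      = (1 - fps_X ^ hdeg (f (Suc i))) * (\<Prod>j\<in>{1..i}. 1 - fps_X ^ hdeg (f j))"
    by (simp add: atLeastAtMostSuc_conv)
  show ?case using hom_Suc by (simp only: series_Suc IH(2) prod_Suc mult.assoc simp_thms)
qed (simp add: ideal_gen_empty homogeneous_ideal_0)

lemma one_minus_fps_X_power:
  "1 - fps_X ^ e = (1 - fps_X) * fps_of_poly (\<Sum>t<e. monom (1::'a::comm_ring_1) t)"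
  by (induction e) (simp_all add: fps_of_poly_add fps_of_poly_monom' algebra_simps)

lemma forms_subset_complete_intersection:
  fixes f :: "nat \<Rightarrow> ('v::finite, 'k::field) mpoly"
  assumes "complete_intersection f"
  obtains N where "\<And>k. N < k \<Longrightarrow> forms k \<subseteq> ideal_gen (f ` {1..CARD('v)})"
proof
  let ?n = "CARD('v)"
  let ?J = "ideal_gen (f ` {1..?n})"
  define P where "P = (\<Prod>j\<in>{1..?n}. \<Sum>t<hdeg (f j). monom (1::int) t)"
  have "(\<Prod>j\<in>{1..?n}. 1 - fps_X ^ hdeg (f j)) = fps_of_poly P * (1 - fps_X) ^ ?n"
    by (simp add: P_def one_minus_fps_X_power prod.distrib fps_of_poly_prod mult.commute)
  then have "hilbert_series ?J = fps_of_poly P"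
    using assms hilbert_series_regular_sequence[of ?n f ?n]
      hilbert_series_0_ideal[where 'v='v and 'k='k]
    unfolding complete_intersection_def by (simp add: mult.assoc)
  then have "hilbert_fun ?J k = coeff P k" for k
    by (metis fps_of_poly_nth hilbert_series_def fps_nth_Abs_fps)
  then show "forms k \<subseteq> ?J" if "degree P < k" for k
    using that by (intro forms_subset_if_hilbert_fun_eq_0 is_ideal_ideal_gen) (simp add: coeff_eq_0)
qed

lemma complex_dim_le_card: "complex_dim (\<Delta> :: 'v::finite set set) d \<Longrightarrow> d + 1 \<le> CARD('v)"
  unfolding complex_dim_def by (metis card_mono finite subset_UNIV)

theorem lemma3p6:
  fixes f :: "nat \<Rightarrow> ('v::finite, 'k::field) mpoly" and d :: nat
  assumes "complete_intersection f"
    and "\<And>\<Delta> i. simplicial_complex \<Delta> \<Longrightarrow> complex_dim \<Delta> d \<Longrightarrow> d + 1 < i \<Longrightarrow> i \<le> CARD('v)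
             \<Longrightarrow> f i \<in> stanley_reisner \<Delta>"
  shows "\<forall>\<Delta>. simplicial_complex \<Delta> \<and> complex_dim \<Delta> d \<longrightarrow>
           system_of_parameters (stanley_reisner \<Delta>) f (d + 1)"
proof (intro allI impI)
  fix \<Delta> :: "'v set set" assume \<Delta>: "simplicial_complex \<Delta> \<and> complex_dim \<Delta> d"
  let ?G = "ideal_gen (stanley_reisner \<Delta> \<union> f ` {1..d + 1})"
  have "f i \<in> ?G" if "i \<in> {1..CARD('v)}" for i
  proof (cases "i \<le> d + 1")
    case False
    then have "f i \<in> stanley_reisner \<Delta>" using assms(2) \<Delta> that by simp
    then show ?thesis using ideal_gen_superset by blast
  qed (use that ideal_gen_superset in fastforce)
  then have "ideal_gen (f ` {1..CARD('v)}) \<subseteq> ?G"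
    by (intro ideal_gen_minimal is_ideal_ideal_gen) blast
  moreover obtain N where "\<And>k. N < k \<Longrightarrow> forms k \<subseteq> ideal_gen (f ` {1..CARD('v)})"
    using forms_subset_complete_intersection[OF assms(1)] by blast
  ultimately have "fin_dim_quotient ?G"
    by (intro fin_dim_quotient_if_forms_subset[of _ N] is_ideal_ideal_gen) blast
  moreover have "\<forall>i\<in>{1..d + 1}. homogeneous (f i)"
    using assms(1) complex_dim_le_card \<Delta> unfolding complete_intersection_def by fastforce
  ultimately show "system_of_parameters (stanley_reisner \<Delta>) f (d + 1)"
    unfolding system_of_parameters_def by blast
qed

end
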